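(* Let $\mathfrak{A}$ be a $(\circ,\wedge,\mathsf{A})$-algebra and $\theta$ a representation of $\mathfrak{A}$ by partial functions. If $\theta$ is meet complete, then $\theta$ is join complete.
   Context: A $(\circ,\wedge,\mathsf{A})$-algebra is a set with two binary operations $\circ,\wedge$ and one unary operation $\mathsf{A}$. An algebra of partial functions of this signature is a set of partial functions, with base $X$ the union of all their domains and ranges, closed under: composition $f\circ g=\{(x,z)\mid \exists y\,(x,y)\in f,(y,z)\in g\}$; intersection; antidomain $\mathsf{A}(f)=\{(x,x)\mid x\in X, x\notin\mathrm{dom}(f)\}$. A representation by partial functions is an isomorphism onto such an algebra. The order on $\mathfrak{A}$ is $a\le b\iff a\wedge b=a$. A representation $\theta$ is meet complete if for every nonempty $S\subseteq\mathfrak{A}$ such that $\bigwedge S$ exists, $\theta(\bigwedge S)=\bigcap\theta[S]$; it is join complete if for every $S\subseteq\mathfrak{A}$ such that $\bigvee S$ exists, $\theta(\bigvee S)=\bigcup\theta[S]$. *)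

theory Defs
  imports Main
begin

definition base :: "('a \<Rightarrow> ('x \<times> 'x) set) \<Rightarrow> 'x set" where
  "base \<theta> = (\<Union>a. Domain (\<theta> a) \<union> Range (\<theta> a))"

text \<open>Composition f;g = {(x,z). (x,y) in f, (y,z) in g} is relcomp f g (f O g).\<close>
definition rep_pf ::
  "('a \<Rightarrow> 'a \<Rightarrow> 'a) \<Rightarrow> ('a \<Rightarrow> 'a \<Rightarrow> 'a) \<Rightarrow> ('a \<Rightarrow> 'a) \<Rightarrow> ('a \<Rightarrow> ('x \<times> 'x) set) \<Rightarrow> bool" where
  "rep_pf cmp meet antidom \<theta> \<longleftrightarrow>
     inj \<theta> \<and>
     (\<forall>a. single_valued (\<theta> a)) \<and>
     (\<forall>a b. \<theta> (cmp a b) = \<theta> a O \<theta> b) \<and>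
     (\<forall>a b. \<theta> (meet a b) = \<theta> a \<inter> \<theta> b) \<and>
     (\<forall>a. \<theta> (antidom a) = Id_on (base \<theta> - Domain (\<theta> a)))"

definition alg_le :: "('a \<Rightarrow> 'a \<Rightarrow> 'a) \<Rightarrow> 'a \<Rightarrow> 'a \<Rightarrow> bool" where
  "alg_le meet a b \<longleftrightarrow> meet a b = a"

definition is_inf :: "('a \<Rightarrow> 'a \<Rightarrow> 'a) \<Rightarrow> 'a set \<Rightarrow> 'a \<Rightarrow> bool" where
  "is_inf meet S m \<longleftrightarrow> (\<forall>s\<in>S. alg_le meet m s) \<and>
      (\<forall>l. (\<forall>s\<in>S. alg_le meet l s) \<longrightarrow> alg_le meet l m)"

definition is_sup :: "('a \<Rightarrow> 'a \<Rightarrow> 'a) \<Rightarrow> 'a set \<Rightarrow> 'a \<Rightarrow> bool" where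
  "is_sup meet S j \<longleftrightarrow> (\<forall>s\<in>S. alg_le meet s j) \<and>
      (\<forall>u. (\<forall>s\<in>S. alg_le meet s u) \<longrightarrow> alg_le meet j u)"

definition meet_complete :: "('a \<Rightarrow> 'a \<Rightarrow> 'a) \<Rightarrow> ('a \<Rightarrow> ('x \<times> 'x) set) \<Rightarrow> bool" where
  "meet_complete meet \<theta> \<longleftrightarrow>
     (\<forall>S m. S \<noteq> {} \<and> is_inf meet S m \<longrightarrow> \<theta> m = \<Inter> (\<theta> ` S))"

definition join_complete :: "('a \<Rightarrow> 'a \<Rightarrow> 'a) \<Rightarrow> ('a \<Rightarrow> ('x \<times> 'x) set) \<Rightarrow> bool" where
  "join_complete meet \<theta> \<longleftrightarrow>
     (\<forall>S j. is_sup meet S j \<longrightarrow> \<theta> j = \<Union> (\<theta> ` S))"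

end

theory Submission
  imports Defs
begin

(* Fix a representation \<theta> and a join j = \<Or>S.  For s \<in> S the element A(s);j is
   represented by \<theta> j restricted to the points outside dom(\<theta> s), its "relative
   complement" below j, and A(j);j is represented by the empty function, so it is the
   least element 0.  The central algebraic fact is that, for nonempty S, the meet of
   all relative complements A(s);j (s \<in> S) is 0: a common lower bound l is disjoint in
   domain from every s, hence every s lies below A(l);j, hence so does j, which forces
   \<theta> l = {}.  Meet completeness turns this into \<Inter>{\<theta>(A(s);j)} = {}, so every pair
   (x,y) \<in> \<theta> j has x \<in> dom(\<theta> s) for some s \<in> S, and single-valuedness of \<theta> j
   gives (x,y) \<in> \<theta> s.  The case S = {} is immediate since j is then 0. *)

locale pf_representation =
  fixes cmp meet :: "'a \<Rightarrow> 'a \<Rightarrow> 'a" and antidom :: "'a \<Rightarrow> 'a"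
    and \<theta> :: "'a \<Rightarrow> ('x \<times> 'x) set"
  assumes rep: "rep_pf cmp meet antidom \<theta>"
begin

lemma single_valued_rep: "single_valued (\<theta> a)"
  using rep unfolding rep_pf_def by blast

lemma le_iff_subset: "alg_le meet a b \<longleftrightarrow> \<theta> a \<subseteq> \<theta> b"
proof
  assume "alg_le meet a b"
  then have "\<theta> a = \<theta> a \<inter> \<theta> b" using rep unfolding alg_le_def rep_pf_def by metis
  then show "\<theta> a \<subseteq> \<theta> b" by blast
next
  assume "\<theta> a \<subseteq> \<theta> b"
  then have "\<theta> (meet a b) = \<theta> a" using rep unfolding rep_pf_def by auto
  then show "alg_le meet a b" using rep unfolding alg_le_def rep_pf_def inj_def by blast
qed

lemma restrict_rep:
  "\<theta> (cmp (antidom l) j) = {(x, y). (x, y) \<in> \<theta> j \<and> x \<notin> Domain (\<theta> l)}"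
proof -
  have "Domain (\<theta> j) \<subseteq> base \<theta>" unfolding base_def by blast
  then show ?thesis using rep unfolding rep_pf_def Id_on_def by auto
qed

lemma zero_rep: "\<theta> (cmp (antidom j) j) = {}"
  by (auto simp: restrict_rep)

lemma sup_upper: "is_sup meet S j \<Longrightarrow> s \<in> S \<Longrightarrow> \<theta> s \<subseteq> \<theta> j"
  using le_iff_subset unfolding is_sup_def by blast

lemma sup_least: "is_sup meet S j \<Longrightarrow> (\<And>s. s \<in> S \<Longrightarrow> \<theta> s \<subseteq> \<theta> u) \<Longrightarrow> \<theta> j \<subseteq> \<theta> u"
  using le_iff_subset unfolding is_sup_def by blast

lemma lower_bound_of_complements_empty:
  assumes sup: "is_sup meet S j" and "S \<noteq> {}"
    and below: "\<And>s. s \<in> S \<Longrightarrow> \<theta> l \<subseteq> \<theta> (cmp (antidom s) j)"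
  shows "\<theta> l = {}"
proof -
  have disjoint: "Domain (\<theta> l) \<inter> Domain (\<theta> s) = {}" if "s \<in> S" for s
    using below[OF that] by (fastforce simp: restrict_rep)
  have "\<theta> s \<subseteq> \<theta> (cmp (antidom l) j)" if "s \<in> S" for s
    using disjoint[OF that] sup_upper[OF sup that] by (auto simp: restrict_rep)
  then have "\<theta> j \<subseteq> \<theta> (cmp (antidom l) j)"
    by (rule sup_least[OF sup])
  then have "Domain (\<theta> j) \<inter> Domain (\<theta> l) = {}"
    by (auto simp: restrict_rep)
  moreover obtain s0 where "s0 \<in> S" using \<open>S \<noteq> {}\<close> by blast
  then have "\<theta> l \<subseteq> \<theta> j" using below by (force simp: restrict_rep)
  ultimately show ?thesis by auto
qed

lemma complements_inf_zero:
  assumes "is_sup meet S j" and "S \<noteq> {}"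
  shows "is_inf meet ((\<lambda>s. cmp (antidom s) j) ` S) (cmp (antidom j) j)"
  unfolding is_inf_def
proof (intro conjI allI impI ballI)
  fix w show "alg_le meet (cmp (antidom j) j) w"
    using le_iff_subset zero_rep by blast
next
  fix l assume "\<forall>w\<in>(\<lambda>s. cmp (antidom s) j) ` S. alg_le meet l w"
  then have "\<theta> l = {}"
    using lower_bound_of_complements_empty[OF assms] le_iff_subset by blast
  then show "alg_le meet l (cmp (antidom j) j)"
    using le_iff_subset zero_rep by blast
qed

lemma pair_outside_complement:
  assumes "\<theta> s \<subseteq> \<theta> j" and "(x, y) \<in> \<theta> j" and "(x, y) \<notin> \<theta> (cmp (antidom s) j)"
  shows "(x, y) \<in> \<theta> s"
proof -
  from assms(2,3) obtain y' where y': "(x, y') \<in> \<theta> s"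
    by (auto simp: restrict_rep)
  with assms(1,2) have "y' = y"
    using single_valued_rep[of j] unfolding single_valued_def by blast
  with y' show ?thesis by simp
qed

lemma join_complete_if_meet_complete:
  assumes mc: "meet_complete meet \<theta>"
  shows "join_complete meet \<theta>"
  unfolding join_complete_def
proof (intro allI impI)
  fix S j assume sup: "is_sup meet S j"
  have "\<theta> j \<subseteq> \<Union> (\<theta> ` S)"
  proof (cases "S = {}")
    case True
    then have "\<theta> j \<subseteq> \<theta> (cmp (antidom j) j)" using sup_least[OF sup] by blast
    then show ?thesis using zero_rep by blast
  next
    case False
    let ?W = "(\<lambda>s. cmp (antidom s) j) ` S"
    have "\<Inter> (\<theta> ` ?W) = {}"
      using mc complements_inf_zero[OF sup False] zero_rep False
      unfolding meet_complete_def by (metis image_is_empty)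
    show ?thesis
    proof
      fix p assume p: "p \<in> \<theta> j"
      obtain x y where xy: "p = (x, y)" by (cases p)
      from \<open>\<Inter> (\<theta> ` ?W) = {}\<close> obtain s where s: "s \<in> S"
        and "(x, y) \<notin> \<theta> (cmp (antidom s) j)" by blast
      then have "(x, y) \<in> \<theta> s"
        using pair_outside_complement sup_upper[OF sup s] p xy by blast
      with s xy show "p \<in> \<Union> (\<theta> ` S)" by blast
    qed
  qed
  moreover have "\<Union> (\<theta> ` S) \<subseteq> \<theta> j" using sup_upper[OF sup] by blast
  ultimately show "\<theta> j = \<Union> (\<theta> ` S)" by blast
qed

end

theorem mainTheorem2:
  fixes cmp meet :: "'a \<Rightarrow> 'a \<Rightarrow> 'a" and antidom :: "'a \<Rightarrow> 'a"
    and \<theta> :: "'a \<Rightarrow> ('x \<times> 'x) set"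
  assumes "rep_pf cmp meet antidom \<theta>"
    and "meet_complete meet \<theta>"
  shows "join_complete meet \<theta>"
proof -
  interpret pf_representation cmp meet antidom \<theta>
    using assms(1) by unfold_locales
  show ?thesis using assms(2) by (rule join_complete_if_meet_complete)
qed

end
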